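(* For every $n\ge 1$, \[ \mathrm{URL}_n=\{\mathrm{shape}(\Psi(\sigma)) : \sigma\in \mathrm{And}^{I}_n\}=\{\mathrm{shape}(\Psi(\sigma)) : \sigma\in \mathrm{And}^{II}_n\}=\{\mathrm{shape}(\Psi(\sigma)) : \sigma\in \mathrm{RS}_n\}. \]
   Context: A binary tree is a rooted tree in which every vertex has no child, a single left child, a single right child, or both. An increasing binary tree is a binary tree with distinct labels increasing along every path from the root. The map $\Psi$ sends a word $\pi$ of distinct integers to an increasing binary tree: $\Psi(\emptyset)=\emptyset$; otherwise write $\pi=\sigma\, i\,\tau$ with $i$ the least letter of $\pi$, and let $\Psi(\pi)$ have root $i$, left subtree $\Psi(\sigma)$ and right subtree $\Psi(\tau)$. $\mathrm{shape}(T)$ is the underlying unlabeled binary tree of $T$. $\mathrm{URL}_n$ is the set of unlabeled rooted binary trees with $n$ vertices in which no vertex has a left child but no right child. Andr\'e permutations: the empty word and one-letter words are Andr\'e I and Andr\'e II. A word $\sigma$ of $n\ge2$ distinct integers, written $\sigma=\tau\,\min(\sigma)\,\tau'$, is Andr\'e I (resp. II) if $\tau,\tau'$ are Andr\'e I (resp. II) and the largest (resp. smallest) letter of $\tau\tau'$ lies in $\tau'$. $\mathrm{And}^{I}_n$, $\mathrm{And}^{II}_n$ denote these permutations of $[n]$. A permutation $\sigma=\sigma_1\cdots\sigma_n$ of $[n]$ is simsun if $\sigma_n=n$ and for every $k\in[n]$ the subword of $\sigma$ formed by the letters $1,\dots,k$ has no index $i$ with $w_i>w_{i+1}>w_{i+2}$.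 $\mathrm{RS}_n$ is the set of simsun permutations of $[n]$. *)

theory Defs
  imports "HOL-Library.Tree"
begin

(* Decomposition w = sigma i tau with i = min w *)
definition lpart :: "'a::linorder list \<Rightarrow> 'a list" where
  "lpart w = takeWhile (\<lambda>x. x \<noteq> Min (set w)) w"
definition rpart :: "'a::linorder list \<Rightarrow> 'a list" where
  "rpart w = tl (dropWhile (\<lambda>x. x \<noteq> Min (set w)) w)"

lemma dw_ne: "w \<noteq> [] \<Longrightarrow> dropWhile (\<lambda>x. x \<noteq> Min (set w)) w \<noteq> []"
  by (simp add: dropWhile_eq_Nil_conv)

lemma lpart_len: "w \<noteq> [] \<Longrightarrow> length (lpart w) < length w"
proof -
  assume ne: "w \<noteq> []"
  have "length w = length (lpart w) + length (dropWhile (\<lambda>x. x \<noteq> Min (set w)) w)"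
    unfolding lpart_def by (metis length_append takeWhile_dropWhile_id)
  with dw_ne[OF ne] show ?thesis by simp
qed

lemma rpart_len: "w \<noteq> [] \<Longrightarrow> length (rpart w) < length w"
proof -
  assume ne: "w \<noteq> []"
  have "length (dropWhile (\<lambda>x. x \<noteq> Min (set w)) w) \<le> length w" by (rule length_dropWhile_le)
  moreover have "length (dropWhile (\<lambda>x. x \<noteq> Min (set w)) w) \<noteq> 0" using dw_ne[OF ne] by simp
  moreover have "length (rpart w) = length (dropWhile (\<lambda>x. x \<noteq> Min (set w)) w) - 1"
    unfolding rpart_def by (simp only: length_tl)
  ultimately show ?thesis by linarith
qed

function Psi :: "'a::linorder list \<Rightarrow> 'a tree" where
  "Psi w = (if w = [] then Leaf else Node (Psi (lpart w)) (Min (set w)) (Psi (rpart w)))"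
  by pat_completeness auto
termination
  by (relation "measure length") (auto simp: lpart_len rpart_len)

declare Psi.simps[simp del]

definition shape :: "'a tree \<Rightarrow> unit tree" where
  "shape t = map_tree (\<lambda>_. ()) t"

fun no_left_only :: "unit tree \<Rightarrow> bool" where
  "no_left_only Leaf = True"
| "no_left_only (Node l _ r) = (\<not> (l \<noteq> Leaf \<and> r = Leaf) \<and> no_left_only l \<and> no_left_only r)"

definition URL :: "nat \<Rightarrow> unit tree set" where
  "URL n = {t. size t = n \<and> no_left_only t}"

function andreI :: "'a::linorder list \<Rightarrow> bool" where
  "andreI w = (if length w \<le> 1 then True else
     (andreI (lpart w) \<and> andreI (rpart w) \<and> Max (set (lpart w @ rpart w)) \<in> set (rpart w)))"
  by pat_completeness auto
termination
  by (relation "measure length") (auto intro!: lpart_len rpart_len)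

function andreII :: "'a::linorder list \<Rightarrow> bool" where
  "andreII w = (if length w \<le> 1 then True else
     (andreII (lpart w) \<and> andreII (rpart w) \<and> Min (set (lpart w @ rpart w)) \<in> set (rpart w)))"
  by pat_completeness auto
termination
  by (relation "measure length") (auto intro!: lpart_len rpart_len)

declare andreI.simps[simp del] andreII.simps[simp del]

definition perms :: "nat \<Rightarrow> nat list set" where
  "perms n = {w. distinct w \<and> set w = {1..n}}"

definition AndI :: "nat \<Rightarrow> nat list set" where
  "AndI n = {w \<in> perms n. andreI w}"
definition AndII :: "nat \<Rightarrow> nat list set" where
  "AndII n = {w \<in> perms n. andreII w}"

definition no_double_descent :: "nat list \<Rightarrow> bool" where
  "no_double_descent v = (\<not> (\<exists>i. i + 2 < length v \<and> v ! i > v ! (i+1) \<and> v ! (i+1) > v ! (i+2)))"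

definition simsun :: "nat \<Rightarrow> nat list \<Rightarrow> bool" where
  "simsun n w = (w \<noteq> [] \<and> last w = n \<and>
     (\<forall>k\<in>{1..n}. no_double_descent (filter (\<lambda>x. x \<le> k) w)))"

definition RS :: "nat \<Rightarrow> nat list set" where
  "RS n = {w \<in> perms n. simsun n w}"

end

theory Submission
  imports Defs
begin

text \<open>
  \<open>Psi\<close> splits a word at its minimum, so a vertex of \<open>shape (Psi w)\<close> has a left child but no
  right child exactly when some factor \<open>\<sigma> i \<tau>\<close> of the recursive decomposition of \<open>w\<close> has
  \<open>\<sigma> \<noteq> []\<close> and \<open>\<tau> = []\<close>. Each of the three conditions passes to \<open>\<sigma>\<close> and \<open>\<tau>\<close> and excludes
  this. For Andre permutations the extreme letter of \<open>\<sigma>\<tau>\<close> lies in \<open>\<tau>\<close>. A simsun word has no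
  double descent and does not end with a descent (it ends with its maximum); as \<open>i\<close> is smaller
  than all other letters, both properties pass to \<open>\<sigma>\<close> and \<open>\<tau>\<close>, and \<open>\<sigma> \<noteq> [] = \<tau>\<close> would make
  \<open>\<sigma> i\<close> end with a descent.

  Conversely, \<open>Psi\<close> inverts the in-order reading of increasing trees, so each tree in
  \<open>URL n\<close> is the shape of \<open>Psi\<close> applied to the in-order reading of any increasing labelling
  of it. Labelling in preorder gives an Andre I permutation, labelling in preorder of the
  mirror image an Andre II permutation, and labelling in preorder but with every left subtree
  hanging off the right spine labelled in mirrored preorder gives a simsun permutation.
\<close>

lemma lpart_rpart_decomp:
  assumes "w \<noteq> []"
  shows "w = lpart w @ Min (set w) # rpart w"
proof -
  let ?P = "\<lambda>x. x \<noteq> Min (set w)"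
  have "dropWhile ?P w \<noteq> []" using dw_ne[OF assms] .
  then have "dropWhile ?P w = Min (set w) # rpart w"
    unfolding rpart_def by (metis (mono_tags, lifting) hd_dropWhile list.collapse)
  then show ?thesis unfolding lpart_def by (metis takeWhile_dropWhile_id)
qed

lemma lpart_rpart_append_min:
  assumes "\<forall>x\<in>set a. m < x" "\<forall>x\<in>set b. m < x"
  shows "Min (set (a @ m # b)) = m" "lpart (a @ m # b) = a" "rpart (a @ m # b) = b"
proof -
  show Min: "Min (set (a @ m # b)) = m"
    using assms by (intro Min_eqI) auto
  have "takeWhile (\<lambda>x. x \<noteq> m) (a @ m # b) = a" "dropWhile (\<lambda>x. x \<noteq> m) (a @ m # b) = m # b"
    using assms(1) by (induction a) auto
  then show "lpart (a @ m # b) = a" "rpart (a @ m # b) = b"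
    unfolding lpart_def rpart_def Min by simp_all
qed

lemma lpart_rpart_Nil [simp]: "lpart [] = []" "rpart [] = []"
  by (simp_all add: lpart_def rpart_def)

lemma lpart_rpart_short: "length w \<le> 1 \<Longrightarrow> lpart w = [] \<and> rpart w = []"
  using lpart_len[of w] rpart_len[of w] by (cases w) auto

lemma Min_less_lpart_rpart:
  assumes "distinct w" "x \<in> set (lpart w) \<union> set (rpart w)"
  shows "Min (set w) < x"
proof -
  have "w \<noteq> []" using assms(2) by auto
  then have "w = lpart w @ Min (set w) # rpart w" by (rule lpart_rpart_decomp)
  moreover have "x \<in> set w" "x \<noteq> m" if "w = a @ m # b" "x \<in> set a \<union> set b" for a m b
    using that assms(1) by auto
  ultimately have "x \<in> set w" "x \<noteq> Min (set w)" using assms(2) by blast+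
  then show ?thesis by (simp add: order.not_eq_order_implies_strict)
qed

lemma Psi_eq_Leaf_iff [simp]: "Psi w = Leaf \<longleftrightarrow> w = []"
  by (subst Psi.simps) simp

lemma Psi_Nil [simp]: "Psi [] = Leaf"
  by simp

lemma Psi_decomp: "w \<noteq> [] \<Longrightarrow> Psi w = Node (Psi (lpart w)) (Min (set w)) (Psi (rpart w))"
  by (simp add: Psi.simps)

lemma Psi_append_min:
  assumes "\<forall>x\<in>set a. m < x" "\<forall>x\<in>set b. m < x"
  shows "Psi (a @ m # b) = Node (Psi a) m (Psi b)"
proof -
  have "Psi (a @ m # b) = Node (Psi (lpart (a @ m # b))) (Min (set (a @ m # b))) (Psi (rpart (a @ m # b)))"
    by (rule Psi_decomp) simp
  then show ?thesis unfolding lpart_rpart_append_min[OF assms] .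
qed

lemma size_Psi: "size (Psi w) = length w"
proof (induction w rule: Psi.induct)
  case (1 w)
  show ?case
  proof (cases "w = []")
    case False
    then have "length w = length (lpart w) + 1 + length (rpart w)"
      by (subst lpart_rpart_decomp[OF False]) simp
    with 1 False show ?thesis by (auto simp: Psi_decomp)
  qed simp
qed

lemma Psi_inorder: "heap T \<Longrightarrow> distinct (inorder T) \<Longrightarrow> Psi (inorder T) = T"
proof (induction T)
  case (Node l m r)
  then have "\<forall>x\<in>set (inorder l). m < x" "\<forall>x\<in>set (inorder r). m < x"
    by (auto simp: order.strict_iff_order)
  with Node show ?case by (simp add: Psi_append_min)
qed simp

lemma shape_simps [simp]:
  "shape Leaf = Leaf" "shape (Node l x r) = Node (shape l) () (shape r)" "size (shape t) = size t"
  by (simp_all add: shape_def)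

lemma shape_unit_tree [simp]: "shape (t :: unit tree) = t"
  by (induction t) auto

lemma no_left_only_shape_Psi_hereditary:
  assumes "P w"
    and hereditary: "\<And>w. P w \<Longrightarrow> P (lpart w) \<and> P (rpart w) \<and> (lpart w \<noteq> [] \<longrightarrow> rpart w \<noteq> [])"
  shows "no_left_only (shape (Psi w))"
  using assms(1)
proof (induction w rule: Psi.induct)
  case (1 w)
  show ?case
  proof (cases "w = []")
    case False
    with 1 hereditary[OF "1.prems"] show ?thesis by (auto simp: Psi_decomp)
  qed simp
qed

lemma andreI_short [simp]: "length w \<le> 1 \<Longrightarrow> andreI w"
  by (simp add: andreI.simps)

lemma andreI_hereditary:
  assumes "andreI w"
  shows "andreI (lpart w) \<and> andreI (rpart w) \<and> (lpart w \<noteq> [] \<longrightarrow> rpart w \<noteq> [])"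
proof (cases "length w \<le> 1")
  case False
  with assms have "andreI (lpart w) \<and> andreI (rpart w) \<and> Max (set (lpart w @ rpart w)) \<in> set (rpart w)"
    by (subst (asm) andreI.simps) simp
  then show ?thesis by auto
qed (simp add: lpart_rpart_short)

lemma andreII_short [simp]: "length w \<le> 1 \<Longrightarrow> andreII w"
  by (simp add: andreII.simps)

lemma andreII_hereditary:
  assumes "andreII w"
  shows "andreII (lpart w) \<and> andreII (rpart w) \<and> (lpart w \<noteq> [] \<longrightarrow> rpart w \<noteq> [])"
proof (cases "length w \<le> 1")
  case False
  with assms have "andreII (lpart w) \<and> andreII (rpart w) \<and> Min (set (lpart w @ rpart w)) \<in> set (rpart w)"
    by (subst (asm) andreII.simps) simp
  then show ?thesis by auto
qed (simp add: lpart_rpart_short)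

lemma andreI_append_min:
  assumes "\<forall>x\<in>set a. m < x" "\<forall>x\<in>set b. m < x"
  shows "andreI (a @ m # b) \<longleftrightarrow>
    a = [] \<and> b = [] \<or> andreI a \<and> andreI b \<and> Max (set (a @ b)) \<in> set b"
  by (subst andreI.simps) (auto simp: lpart_rpart_append_min[OF assms])

lemma andreII_append_min:
  assumes "\<forall>x\<in>set a. m < x" "\<forall>x\<in>set b. m < x"
  shows "andreII (a @ m # b) \<longleftrightarrow>
    a = [] \<and> b = [] \<or> andreII a \<and> andreII b \<and> Min (set (a @ b)) \<in> set b"
  by (subst andreII.simps) (auto simp: lpart_rpart_append_min[OF assms])

fun has_double_descent :: "'a::linorder list \<Rightarrow> bool" where
  "has_double_descent (a # b # c # xs) = (b < a \<and> c < b \<or> has_double_descent (b # c # xs))"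
| "has_double_descent _ = False"

fun ends_with_descent :: "'a::linorder list \<Rightarrow> bool" where
  "ends_with_descent [a, b] = (b < a)"
| "ends_with_descent (a # b # c # xs) = ends_with_descent (b # c # xs)"
| "ends_with_descent _ = False"

lemma no_double_descent_iff: "no_double_descent v \<longleftrightarrow> \<not> has_double_descent v"
proof (induction v rule: has_double_descent.induct)
  case (1 a b c xs)
  have split: "(\<exists>i. P i) \<longleftrightarrow> P 0 \<or> (\<exists>i. P (Suc i))" for P :: "nat \<Rightarrow> bool"
    by (metis not0_implies_Suc)
  show ?case using 1 unfolding no_double_descent_def by (subst split) simp
qed (auto simp: no_double_descent_def)

lemma has_double_descent_append_min:
  assumes "\<forall>x\<in>set xs. m < x" "\<forall>y\<in>set ys. m < y"
  shows "has_double_descent (xs @ m # ys) \<longleftrightarrow>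
    has_double_descent xs \<or> ends_with_descent xs \<or> has_double_descent ys"
  using assms
  by (induction xs rule: has_double_descent.induct; cases ys rule: has_double_descent.cases) auto

lemma ends_with_descent_append_min:
  assumes "\<forall>x\<in>set xs. m < x" "\<forall>y\<in>set ys. m < y"
  shows "ends_with_descent (xs @ m # ys) \<longleftrightarrow> (if ys = [] then xs \<noteq> [] else ends_with_descent ys)"
  using assms
  by (induction xs rule: has_double_descent.induct; cases ys rule: has_double_descent.cases) auto

lemma ends_with_descent_last: "ends_with_descent w \<Longrightarrow> \<exists>a\<in>set w. last w < a"
  by (induction w rule: ends_with_descent.induct) auto

lemma descent_free_hereditary:
  assumes "distinct w \<and> \<not> has_double_descent w \<and> \<not> ends_with_descent w" (is "?P w")
  shows "?P (lpart w) \<and> ?P (rpart w) \<and> (lpart w \<noteq> [] \<longrightarrow> rpart w \<noteq> [])"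
proof (cases "w = []")
  case False
  let ?a = "lpart w" and ?b = "rpart w" and ?m = "Min (set w)"
  have w: "w = ?a @ ?m # ?b" using False by (rule lpart_rpart_decomp)
  have "\<forall>x\<in>set ?a. ?m < x" "\<forall>x\<in>set ?b. ?m < x"
    using Min_less_lpart_rpart assms by blast+
  note descents = has_double_descent_append_min[OF this] ends_with_descent_append_min[OF this]
  have "distinct ?a" "distinct ?b" using assms w by (metis distinct.simps(2) distinct_append)+
  from assms have "?P (?a @ ?m # ?b)" by (metis w)
  with \<open>distinct ?a\<close> \<open>distinct ?b\<close> show ?thesis by (auto simp: descents split: if_splits)
qed simp

lemma simsun_descent_free:
  assumes "simsun n w" "set w = {1..n}"
  shows "\<not> has_double_descent w \<and> \<not> ends_with_descent w"
proof
  have "filter (\<lambda>x. x \<le> n) w = w" using assms(2) by (auto simp: filter_id_conv)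
  moreover have "n \<in> {1..n}" using assms by (auto simp: simsun_def)
  ultimately show "\<not> has_double_descent w"
    using assms(1) by (metis simsun_def no_double_descent_iff)
  show "\<not> ends_with_descent w"
    using assms ends_with_descent_last by (fastforce simp: simsun_def)
qed

fun preorder_labelling :: "'a tree \<Rightarrow> nat \<Rightarrow> nat tree" where
  "preorder_labelling Leaf s = Leaf"
| "preorder_labelling (Node l _ r) s =
     Node (preorder_labelling l (s + 1)) s (preorder_labelling r (s + 1 + size l))"

fun mirror_preorder_labelling :: "'a tree \<Rightarrow> nat \<Rightarrow> nat tree" where
  "mirror_preorder_labelling Leaf s = Leaf"
| "mirror_preorder_labelling (Node l _ r) s =
     Node (mirror_preorder_labelling l (s + 1 + size r)) s (mirror_preorder_labelling r (s + 1))"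

fun simsun_labelling :: "'a tree \<Rightarrow> nat \<Rightarrow> nat tree" where
  "simsun_labelling Leaf s = Leaf"
| "simsun_labelling (Node l _ r) s =
     Node (mirror_preorder_labelling l (s + 1)) s (simsun_labelling r (s + 1 + size l))"

lemma set_tree_preorder_labelling [simp]: "set_tree (preorder_labelling t s) = {s..<s + size t}"
  by (induction t arbitrary: s) auto

lemma set_tree_mirror_preorder_labelling [simp]:
  "set_tree (mirror_preorder_labelling t s) = {s..<s + size t}"
  by (induction t arbitrary: s) auto

lemma set_tree_simsun_labelling [simp]: "set_tree (simsun_labelling t s) = {s..<s + size t}"
  by (induction t arbitrary: s) auto

lemma shape_preorder_labelling [simp]: "shape (preorder_labelling t s) = shape t"
  by (induction t arbitrary: s) auto

lemma shape_mirror_preorder_labelling [simp]: "shape (mirror_preorder_labelling t s) = shape t"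
  by (induction t arbitrary: s) auto

lemma shape_simsun_labelling [simp]: "shape (simsun_labelling t s) = shape t"
  by (induction t arbitrary: s) auto

lemma mirror_preorder_labelling_eq_Leaf_iff [simp]:
  "mirror_preorder_labelling t s = Leaf \<longleftrightarrow> t = Leaf"
  by (cases t) auto

lemma simsun_labelling_eq_Leaf_iff [simp]: "simsun_labelling t s = Leaf \<longleftrightarrow> t = Leaf"
  by (cases t) auto

lemma heap_preorder_labelling: "heap (preorder_labelling t s)"
  by (induction t arbitrary: s) auto

lemma heap_mirror_preorder_labelling: "heap (mirror_preorder_labelling t s)"
  by (induction t arbitrary: s) auto

lemma heap_simsun_labelling: "heap (simsun_labelling t s)"
  by (induction t arbitrary: s) (auto simp: heap_mirror_preorder_labelling)

lemma andreI_inorder_preorder_labelling: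
  "no_left_only t \<Longrightarrow> andreI (inorder (preorder_labelling t s))"
proof (induction t arbitrary: s)
  case (Node l u r)
  let ?a = "inorder (preorder_labelling l (s + 1))"
  let ?b = "inorder (preorder_labelling r (s + 1 + size l))"
  have greater: "\<forall>x\<in>set ?a. s < x" "\<forall>x\<in>set ?b. s < x" by auto
  have "andreI (?a @ s # ?b)"
  proof (cases "r = Leaf")
    case False
    then have "0 < size r" by (cases r) auto
    then have "Max (set (?a @ ?b)) = s + size l + size r" by (intro Max_eqI) auto
    with \<open>0 < size r\<close> have "Max (set (?a @ ?b)) \<in> set ?b" by simp
    with Node show ?thesis unfolding andreI_append_min[OF greater] by auto
  qed (use Node.prems in simp)
  then show ?case by simp
qed simp

lemma andreII_inorder_mirror_preorder_labelling:
  "no_left_only t \<Longrightarrow> andreII (inorder (mirror_preorder_labelling t s))"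
proof (induction t arbitrary: s)
  case (Node l u r)
  let ?a = "inorder (mirror_preorder_labelling l (s + 1 + size r))"
  let ?b = "inorder (mirror_preorder_labelling r (s + 1))"
  have greater: "\<forall>x\<in>set ?a. s < x" "\<forall>x\<in>set ?b. s < x" by auto
  have "andreII (?a @ s # ?b)"
  proof (cases "r = Leaf")
    case False
    then have "0 < size r" by (cases r) auto
    then have "Min (set (?a @ ?b)) = s + 1" by (intro Min_eqI) auto
    with \<open>0 < size r\<close> have "Min (set (?a @ ?b)) \<in> set ?b" by simp
    with Node show ?thesis unfolding andreII_append_min[OF greater] by auto
  qed (use Node.prems in simp)
  then show ?case by simp
qed simp

lemma descent_free_filter_mirror_preorder_labelling:
  assumes "no_left_only t"
  shows "\<not> has_double_descent (filter (\<lambda>x. x \<le> k) (inorder (mirror_preorder_labelling t s))) \<and>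
    \<not> ends_with_descent (filter (\<lambda>x. x \<le> k) (inorder (mirror_preorder_labelling t s)))"
  using assms
proof (induction t arbitrary: s)
  case (Node l u r)
  let ?a = "filter (\<lambda>x. x \<le> k) (inorder (mirror_preorder_labelling l (s + 1 + size r)))"
  let ?b = "filter (\<lambda>x. x \<le> k) (inorder (mirror_preorder_labelling r (s + 1)))"
  show ?case
  proof (cases "s \<le> k")
    case True
    have greater: "\<forall>x\<in>set ?a. s < x" "\<forall>x\<in>set ?b. s < x" by auto
    have "?b \<noteq> []" if "?a \<noteq> []"
    proof -
      \<comment> \<open>left labels exceed right labels, so the whole right subtree survives the filter\<close>
      from that have "s + 1 + size r \<le> k" "l \<noteq> Leaf" by (auto simp: filter_empty_conv)
      with Node.prems show ?thesis by (auto simp: filter_empty_conv)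
    qed
    then have "\<not> has_double_descent (?a @ s # ?b) \<and> \<not> ends_with_descent (?a @ s # ?b)"
      unfolding has_double_descent_append_min[OF greater] ends_with_descent_append_min[OF greater]
      using Node by auto
    with True show ?thesis by simp
  next
    case False
    then show ?thesis by (auto simp: filter_empty_conv)
  qed
qed simp

lemma no_double_descent_filter_simsun_labelling:
  assumes "no_left_only t"
  shows "\<not> has_double_descent (filter (\<lambda>x. x \<le> k) (inorder (simsun_labelling t s)))"
  using assms
proof (induction t arbitrary: s)
  case (Node l u r)
  let ?a = "filter (\<lambda>x. x \<le> k) (inorder (mirror_preorder_labelling l (s + 1)))"
  let ?b = "filter (\<lambda>x. x \<le> k) (inorder (simsun_labelling r (s + 1 + size l)))"
  show ?case
  proof (cases "s \<le> k")
    case True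
    have greater: "\<forall>x\<in>set ?a. s < x" "\<forall>x\<in>set ?b. s < x" by auto
    have "\<not> has_double_descent (?a @ s # ?b)"
      unfolding has_double_descent_append_min[OF greater]
      using Node descent_free_filter_mirror_preorder_labelling by auto
    with True show ?thesis by simp
  next
    case False
    then show ?thesis by (auto simp: filter_empty_conv)
  qed
qed simp

lemma last_inorder_simsun_labelling:
  "no_left_only t \<Longrightarrow> t \<noteq> Leaf \<Longrightarrow> last (inorder (simsun_labelling t s)) = s + size t - 1"
proof (induction t arbitrary: s)
  case (Node l u r)
  then show ?case by (cases "r = Leaf") auto
qed simp

lemma simsun_inorder_simsun_labelling:
  assumes "no_left_only t" "t \<noteq> Leaf"
  shows "simsun (size t) (inorder (simsun_labelling t 1))"
  using assms last_inorder_simsun_labelling no_double_descent_filter_simsun_labelling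
  by (simp add: simsun_def no_double_descent_iff)

lemma URL_eq_image_shape_Psi:
  assumes "W \<subseteq> perms n"
    and W_shape: "\<And>w. w \<in> W \<Longrightarrow> no_left_only (shape (Psi w))"
    and URL_labelling: "\<And>t. t \<in> URL n \<Longrightarrow> \<exists>T. heap T \<and> shape T = t \<and> inorder T \<in> W"
  shows "URL n = (\<lambda>\<sigma>. shape (Psi \<sigma>)) ` W"
proof
  show "(\<lambda>\<sigma>. shape (Psi \<sigma>)) ` W \<subseteq> URL n"
  proof clarify
    fix w assume "w \<in> W"
    then have "length w = n" using assms(1) distinct_card by (fastforce simp: perms_def)
    with W_shape[OF \<open>w \<in> W\<close>] show "shape (Psi w) \<in> URL n" by (simp add: URL_def size_Psi)
  qed
  show "URL n \<subseteq> (\<lambda>\<sigma>. shape (Psi \<sigma>)) ` W"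
  proof
    fix t assume "t \<in> URL n"
    then obtain T where "heap T" "shape T = t" "inorder T \<in> W" using URL_labelling by blast
    moreover from this have "distinct (inorder T)" using assms(1) by (auto simp: perms_def)
    ultimately show "t \<in> (\<lambda>\<sigma>. shape (Psi \<sigma>)) ` W" by (metis Psi_inorder image_eqI)
  qed
qed

lemma inorder_labelling_in_perms:
  assumes "set_tree T = {1..<1 + size t}" "shape T = shape t"
  shows "inorder T \<in> perms (size t)"
proof -
  have "size T = size t" using assms(2) by (metis shape_simps(3))
  with assms(1) have "card (set (inorder T)) = length (inorder T)" by simp
  then have "distinct (inorder T)" by (rule card_distinct)
  with assms(1) show ?thesis by (simp add: perms_def atLeastLessThanSuc_atLeastAtMost)
qed

lemma URL_eq_image_AndI: "URL n = (\<lambda>\<sigma>. shape (Psi \<sigma>)) ` AndI n"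
proof (rule URL_eq_image_shape_Psi)
  show "AndI n \<subseteq> perms n" by (auto simp: AndI_def)
  show "no_left_only (shape (Psi w))" if "w \<in> AndI n" for w
    by (rule no_left_only_shape_Psi_hereditary[where P = andreI, OF _ andreI_hereditary])
      (use that in \<open>simp add: AndI_def\<close>)
  show "\<exists>T. heap T \<and> shape T = t \<and> inorder T \<in> AndI n" if "t \<in> URL n" for t
  proof (intro exI conjI)
    from that have "size t = n" "no_left_only t" by (simp_all add: URL_def)
    then show "inorder (preorder_labelling t 1) \<in> AndI n"
      unfolding AndI_def
      using andreI_inorder_preorder_labelling inorder_labelling_in_perms[of "preorder_labelling t 1" t]
      by simp
  qed (simp_all add: heap_preorder_labelling)
qed

lemma URL_eq_image_AndII: "URL n = (\<lambda>\<sigma>. shape (Psi \<sigma>)) ` AndII n"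
proof (rule URL_eq_image_shape_Psi)
  show "AndII n \<subseteq> perms n" by (auto simp: AndII_def)
  show "no_left_only (shape (Psi w))" if "w \<in> AndII n" for w
    by (rule no_left_only_shape_Psi_hereditary[where P = andreII, OF _ andreII_hereditary])
      (use that in \<open>simp add: AndII_def\<close>)
  show "\<exists>T. heap T \<and> shape T = t \<and> inorder T \<in> AndII n" if "t \<in> URL n" for t
  proof (intro exI conjI)
    from that have "size t = n" "no_left_only t" by (simp_all add: URL_def)
    then show "inorder (mirror_preorder_labelling t 1) \<in> AndII n"
      unfolding AndII_def
      using andreII_inorder_mirror_preorder_labelling
        inorder_labelling_in_perms[of "mirror_preorder_labelling t 1" t]
      by simp
  qed (simp_all add: heap_mirror_preorder_labelling)
qed

lemma URL_eq_image_RS: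
  assumes "n \<ge> 1"
  shows "URL n = (\<lambda>\<sigma>. shape (Psi \<sigma>)) ` RS n"
proof (rule URL_eq_image_shape_Psi)
  show "RS n \<subseteq> perms n" by (auto simp: RS_def)
  show "no_left_only (shape (Psi w))" if "w \<in> RS n" for w
  proof (rule no_left_only_shape_Psi_hereditary[OF _ descent_free_hereditary])
    from that show "distinct w \<and> \<not> has_double_descent w \<and> \<not> ends_with_descent w"
      using simsun_descent_free by (auto simp: RS_def perms_def)
  qed
  show "\<exists>T. heap T \<and> shape T = t \<and> inorder T \<in> RS n" if "t \<in> URL n" for t
  proof (intro exI conjI)
    from that assms have "size t = n" "no_left_only t" "t \<noteq> Leaf" by (auto simp: URL_def)
    then show "inorder (simsun_labelling t 1) \<in> RS n"
      unfolding RS_def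
      using simsun_inorder_simsun_labelling[of t] inorder_labelling_in_perms[of "simsun_labelling t 1" t]
      by simp
  qed (simp_all add: heap_simsun_labelling)
qed

theorem proposition2p4:
  fixes n :: nat
  assumes "n \<ge> 1"
  shows "URL n = (\<lambda>\<sigma>. shape (Psi \<sigma>)) ` AndI n
       \<and> URL n = (\<lambda>\<sigma>. shape (Psi \<sigma>)) ` AndII n
       \<and> URL n = (\<lambda>\<sigma>. shape (Psi \<sigma>)) ` RS n"
  using URL_eq_image_AndI URL_eq_image_AndII URL_eq_image_RS[OF assms] by blast

end
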